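(* Let $d=1$. Then $\Pi^{0}=\mathbb{Q}$. That is, a real number $x$ has the property that for every non-increasing $\psi:\mathbb{N}\to\mathbb{R}_{\ge0}$ with $\sum_n\psi(n)=\infty$ there are infinitely many $n\in\mathbb{N}$ with $\|nx\|<\psi(n)$, if and only if $x\in\mathbb{Q}$.
   Context: For $t\in\mathbb{R}$, $\|t\|$ is the distance from $t$ to $\mathbb{Z}$. Write $\mathbb{N}=\{1,2,\dots\}$. $\Pi^0=\{x\in\mathbb{R}:(x,0)\in\Pi\}$, where $\Pi$ is the set of $(x,y)\in\mathbb{R}^2$ such that for every non-increasing $\psi:\mathbb{N}\to\mathbb{R}_{\ge0}$ with $\sum_n\psi(n)=\infty$, one has $\|nx+y\|<\psi(n)$ for infinitely many $n\in\mathbb{N}$. *)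

theory Defs
  imports "HOL-Analysis.Analysis"
begin

definition dist_int :: "real \<Rightarrow> real" where
  "dist_int t = (INF k\<in>(\<int>::real set). \<bar>t - k\<bar>)"

text \<open>Admissible psi on N = {1,2,...}: nonnegative, non-increasing, divergent sum.
  Values at 0 are irrelevant.\<close>
definition admissible_psi :: "(nat \<Rightarrow> real) \<Rightarrow> bool" where
  "admissible_psi \<psi> \<longleftrightarrow>
     (\<forall>n\<ge>1. \<psi> n \<ge> 0) \<and>
     (\<forall>m n. 1 \<le> m \<longrightarrow> m \<le> n \<longrightarrow> \<psi> n \<le> \<psi> m) \<and>
     \<not> summable (\<lambda>n. \<psi> (Suc n))"

definition Pi_set :: "(real \<times> real) set" where
  "Pi_set = {(x, y). \<forall>\<psi>. admissible_psi \<psi> \<longrightarrow>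
              infinite {n::nat. n \<ge> 1 \<and> dist_int (real n * x + y) < \<psi> n}}"

definition Pi0 :: "real set" where
  "Pi0 = {x. (x, 0) \<in> Pi_set}"

end

theory Submission
  imports Defs "HOL-Analysis.Kronecker_Approximation_Theorem"
begin

text \<open>For rational \<open>x = p/q\<close> we have \<open>\<parallel>nx\<parallel> = 0\<close> whenever \<open>q\<close> divides \<open>n\<close>, and an admissible \<open>\<psi>\<close>
  never vanishes (it would then be eventually zero, hence summable). For irrational \<open>x\<close> take
  \<open>\<psi>(n) = min {\<parallel>mx\<parallel> | 1 \<le> m \<le> n}\<close>: it is positive and non-increasing, and \<open>\<parallel>nx\<parallel> < \<psi>(n)\<close> never
  holds. It is not summable: if \<open>n\<close> is a best approximation, i.e. \<open>\<parallel>nx\<parallel> < \<parallel>mx\<parallel>\<close> for all \<open>m < n\<close>,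
  and \<open>a\<close>, \<open>b\<close> are the integers nearest to \<open>mx\<close>, \<open>nx\<close>, then the integer \<open>mb - na\<close> is nonzero and
  \<open>1 \<le> |mb - na| \<le> n\<parallel>mx\<parallel> + m\<parallel>nx\<parallel> < 2n\<parallel>mx\<parallel>\<close>, so \<open>\<psi>(n - 1) > 1/(2n)\<close>; Dirichlet's theorem
  provides arbitrarily large best approximations.\<close>

lemma dist_int_eq_round: "dist_int t = \<bar>t - of_int (round t)\<bar>"
  unfolding dist_int_def
proof (rule antisym)
  show "(INF k\<in>\<int>. \<bar>t - k\<bar>) \<le> \<bar>t - of_int (round t)\<bar>"
    by (rule cINF_lower) (auto intro: bdd_belowI[where m=0])
  show "\<bar>t - of_int (round t)\<bar> \<le> (INF k\<in>\<int>. \<bar>t - k\<bar>)"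
    by (rule cINF_greatest) (auto elim!: Ints_cases intro: round_diff_minimal)
qed

lemma dist_int_le: "k \<in> \<int> \<Longrightarrow> dist_int t \<le> \<bar>t - k\<bar>"
  by (auto simp: dist_int_eq_round elim!: Ints_cases intro: round_diff_minimal)

lemma dist_int_nonneg: "dist_int t \<ge> 0"
  by (simp add: dist_int_eq_round)

lemma dist_int_eq_0_iff: "dist_int t = 0 \<longleftrightarrow> t \<in> \<int>"
  by (auto simp: dist_int_eq_round elim!: Ints_cases) (metis Ints_of_int)

lemma admissible_psi_pos:
  assumes "admissible_psi \<psi>" "n \<ge> 1"
  shows "\<psi> n > 0"
proof (rule ccontr)
  assume "\<not> \<psi> n > 0"
  then have "\<psi> (Suc k) = 0" if "k \<notin> {..<n}" for k
  proof -
    have "\<psi> (Suc k) \<le> \<psi> n" "\<psi> (Suc k) \<ge> 0"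
      using assms that unfolding admissible_psi_def by auto
    with \<open>\<not> \<psi> n > 0\<close> show ?thesis by linarith
  qed
  then have "summable (\<lambda>k. \<psi> (Suc k))"
    by (intro summable_finite[of "{..<n}"]) auto
  with assms(1) show False
    unfolding admissible_psi_def by simp
qed

lemma rational_in_Pi0:
  assumes "x \<in> \<rat>"
  shows "x \<in> Pi0"
proof -
  obtain a b where "b > 0" and x: "x = of_int a / of_int b"
    using assms by (auto elim: Rats_cases')
  have "infinite {n::nat. n \<ge> 1 \<and> dist_int (real n * x + 0) < \<psi> n}"
    if "admissible_psi \<psi>" for \<psi>
    unfolding infinite_nat_iff_unbounded
  proof
    fix m :: nat
    define n where "n = (m + 1) * nat b"
    have "m + 1 \<le> n"
      using \<open>b > 0\<close> mult_le_mono2[of 1 "nat b" "m + 1"] unfolding n_def by simp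
    then have "n > m" "n \<ge> 1" by auto
    moreover have "real n * x = of_int ((int m + 1) * a)"
      using \<open>b > 0\<close> unfolding n_def x by (simp add: field_simps)
    then have "dist_int (real n * x + 0) = 0"
      by (simp add: dist_int_eq_0_iff)
    ultimately show "\<exists>n>m. n \<in> {n. 1 \<le> n \<and> dist_int (real n * x + 0) < \<psi> n}"
      using admissible_psi_pos[OF that] by auto
  qed
  then show ?thesis
    unfolding Pi0_def Pi_set_def by auto
qed

lemma antimono_not_summable_if_frequently_ge:
  fixes f :: "nat \<Rightarrow> real"
  assumes "antimono f" "c > 0" "\<And>N. \<exists>n>N. c / real n \<le> f n"
  shows "\<not> summable f"
proof
  assume "summable f"
  then obtain N where N: "\<And>n. norm (sum f {N..<n}) < c / 2"
    using \<open>c > 0\<close> unfolding summable_Cauchy by (meson half_gt_zero order_refl)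
  obtain n where "n > 2 * N" and fn: "c / real n \<le> f n"
    using assms(3) by blast
  have "c / 2 \<le> real (n - N) * (c / real n)"
    using \<open>n > 2 * N\<close> \<open>c > 0\<close> by (simp add: field_simps of_nat_diff)
  also have "\<dots> \<le> real (n - N) * f n"
    using fn by (intro mult_left_mono) auto
  also have "\<dots> \<le> sum f {N..<n}"
    using sum_bounded_below[of "{N..<n}" "f n" f] antimonoD[OF assms(1)] by simp
  finally show False
    using N[of n] by simp
qed

lemma best_approximation_lower_bound:
  fixes x :: real and m n :: nat
  assumes "1 \<le> m" "m \<le> n" "dist_int (real n * x) < dist_int (real m * x)"
  shows "1 < 2 * real n * dist_int (real m * x)"
proof -
  define a b where "a = round (real m * x)" and "b = round (real n * x)"
  define A B where "A = dist_int (real m * x)" and "B = dist_int (real n * x)"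
  have nA: "real n * A = \<bar>real n * (real m * x - a)\<bar>"
    and mB: "real m * B = \<bar>real m * (real n * x - b)\<bar>"
    unfolding A_def B_def a_def b_def dist_int_eq_round by (simp_all add: abs_mult)
  have "real m * B < real m * A"
    using assms unfolding A_def B_def by simp
  also have "\<dots> \<le> real n * A"
    using assms dist_int_nonneg unfolding A_def B_def by (intro mult_right_mono) auto
  finally have "real m * B < real n * A" .
  have diff: "of_int (int m * b - int n * a)
      = real n * (real m * x - a) - real m * (real n * x - b)"
    by (simp add: algebra_simps)
  have "int m * b - int n * a \<noteq> 0"
  proof
    assume "int m * b - int n * a = 0"
    with diff have "real n * A = real m * B"
      unfolding nA mB by simp
    with \<open>real m * B < real n * A\<close> show False by simp
  qed
  then have "1 \<le> \<bar>of_int (int m * b - int n * a) :: real\<bar>"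
    by linarith
  also have "\<dots> \<le> real n * A + real m * B"
    unfolding diff nA mB by (rule abs_triangle_ineq4)
  finally show ?thesis
    using \<open>real m * B < real n * A\<close> unfolding A_def B_def by simp
qed

lemma dist_int_mult_arbitrarily_small:
  assumes "c > 0"
  shows "\<exists>n \<ge> 1. dist_int (real n * x) < c"
proof -
  obtain N :: nat where "1 / c < real N"
    using reals_Archimedean2 by blast
  moreover have "0 < 1 / c"
    using \<open>c > 0\<close> by simp
  ultimately have "real N > 0"
    by linarith
  with \<open>1 / c < real N\<close> \<open>c > 0\<close> have "N > 0" "1 / real N < c"
    by (simp_all add: field_simps)
  then obtain h k where "0 < k" "\<bar>of_int k * x - of_int h\<bar> < 1 / real N"
    using Dirichlet_approx by metis
  moreover have "dist_int (real (nat k) * x) \<le> \<bar>of_int k * x - of_int h\<bar>"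
    using \<open>0 < k\<close> dist_int_le[of "of_int h"] by simp
  ultimately show ?thesis
    using \<open>1 / real N < c\<close> by (intro exI[of _ "nat k"]) auto
qed

lemma dist_int_mult_pos_if_irrational:
  assumes "x \<notin> \<rat>" "1 \<le> m"
  shows "dist_int (real m * x) > 0"
proof -
  have "real m * x \<notin> \<int>"
  proof
    assume "real m * x \<in> \<int>"
    then obtain k where "real m * x = of_int k"
      by (auto elim: Ints_cases)
    with \<open>1 \<le> m\<close> have "x = of_int k / of_nat m"
      by (simp add: field_simps)
    with assms(1) show False by simp
  qed
  with dist_int_nonneg dist_int_eq_0_iff show ?thesis
    by (metis less_eq_real_def)
qed

definition least_dist_upto :: "real \<Rightarrow> nat \<Rightarrow> real" where
  "least_dist_upto x n = Min ((\<lambda>m. dist_int (real m * x)) ` {1..max 1 n})"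

lemma least_dist_upto_le:
  "1 \<le> m \<Longrightarrow> m \<le> n \<Longrightarrow> least_dist_upto x n \<le> dist_int (real m * x)"
  unfolding least_dist_upto_def by (intro Min_le) auto

lemma least_dist_upto_gt:
  assumes "n \<ge> 1" "\<And>m. 1 \<le> m \<Longrightarrow> m \<le> n \<Longrightarrow> c < dist_int (real m * x)"
  shows "c < least_dist_upto x n"
  unfolding least_dist_upto_def using assms by (subst Min_gr_iff) auto

lemma antimono_least_dist_upto: "antimono (least_dist_upto x)"
  unfolding least_dist_upto_def by (intro antimonoI Min_antimono) auto

lemma least_dist_upto_pos:
  assumes "x \<notin> \<rat>"
  shows "least_dist_upto x n > 0"
  unfolding least_dist_upto_def using dist_int_mult_pos_if_irrational[OF assms]
  by (subst Min_gr_iff) auto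

lemma exists_best_approximation_beyond:
  assumes "x \<notin> \<rat>"
  shows "\<exists>n>N. \<forall>m. 1 \<le> m \<longrightarrow> m < n \<longrightarrow>
           1 < 2 * real n * dist_int (real m * x)"
proof -
  define c where "c = least_dist_upto x N"
  define P where "P n \<longleftrightarrow> 1 \<le> n \<and> dist_int (real n * x) < c" for n
  have "\<exists>n. P n"
    using dist_int_mult_arbitrarily_small least_dist_upto_pos[OF assms]
    unfolding P_def c_def by blast
  then obtain n where "P n" and below: "\<And>m. m < n \<Longrightarrow> \<not> P m"
    by (metis exists_least_iff)
  have "n > N"
  proof (rule ccontr)
    assume "\<not> n > N"
    with \<open>P n\<close> have "c \<le> dist_int (real n * x)"
      using least_dist_upto_le[of n N x] unfolding P_def c_def by simp
    with \<open>P n\<close> show False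
      unfolding P_def by simp
  qed
  moreover have "1 < 2 * real n * dist_int (real m * x)" if "1 \<le> m" "m < n" for m
    using \<open>P n\<close> below[of m] that by (intro best_approximation_lower_bound) (auto simp: P_def)
  ultimately show ?thesis by blast
qed

lemma least_dist_upto_not_summable:
  assumes "x \<notin> \<rat>"
  shows "\<not> summable (least_dist_upto x)"
proof (rule antimono_not_summable_if_frequently_ge[OF antimono_least_dist_upto])
  fix N
  obtain n where "n > Suc N"
    and best: "\<And>m. 1 \<le> m \<Longrightarrow> m < n \<Longrightarrow> 1 < 2 * real n * dist_int (real m * x)"
    using exists_best_approximation_beyond[OF assms] by blast
  have "1 / 4 / real (n - 1) \<le> 1 / (2 * real n)"
    using \<open>n > Suc N\<close> by (simp add: field_simps of_nat_diff)
  also have "\<dots> < least_dist_upto x (n - 1)"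
    using \<open>n > Suc N\<close> best by (intro least_dist_upto_gt) (auto simp: field_simps)
  finally show "\<exists>k>N. 1 / 4 / real k \<le> least_dist_upto x k"
    using \<open>n > Suc N\<close> by (intro exI[of _ "n - 1"]) auto
qed simp

lemma admissible_least_dist_upto:
  assumes "x \<notin> \<rat>"
  shows "admissible_psi (least_dist_upto x)"
  unfolding admissible_psi_def
  using least_dist_upto_pos[OF assms] antimonoD[OF antimono_least_dist_upto]
    least_dist_upto_not_summable[OF assms]
  by (auto simp: summable_Suc_iff intro: less_imp_le)

lemma irrational_not_in_Pi0:
  assumes "x \<notin> \<rat>"
  shows "x \<notin> Pi0"
proof
  assume "x \<in> Pi0"
  then have "infinite {n::nat. n \<ge> 1 \<and> dist_int (real n * x + 0) < least_dist_upto x n}"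
    using admissible_least_dist_upto[OF assms] unfolding Pi0_def Pi_set_def by auto
  moreover have "\<not> dist_int (real n * x) < least_dist_upto x n" if "n \<ge> 1" for n
    using least_dist_upto_le[OF that order_refl, of x] by simp
  ultimately show False
    by (metis (mono_tags, lifting) Collect_empty_eq add_0_right finite.emptyI)
qed

theorem lemma23:
  shows "Pi0 = \<rat>"
  using rational_in_Pi0 irrational_not_in_Pi0 by blast

end
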